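(* Let $T=(V,E)$ be an infinite spherically symmetric rooted tree with root $v_0$ and branching degrees $(d_r)_{r\ge0}$, $d_r\ge2$, $\sup_rd_r<\infty$, and let $S_n$, $\mathcal U_{n,r}$, $\mathcal V_n$ be as in the context. Then: (1) $\dim\ell^2(S_n)=|S_n|=\prod_{q=0}^{n-1}d_q$ for all $n\ge0$; (2) $\dim\mathcal U_{n,r}=\big(\prod_{q=0}^{n-2}d_q\big)(d_{n-1}-1)$ for all $n\ge2$, $r\ge n$; $\dim\mathcal U_{1,r}=d_0-1$ for all $r\ge1$; and $\dim\mathcal U_{0,r}=1$ for all $r\ge0$; (3) $\dim\mathcal V_n=\infty$ for all $n\ge0$.
   Context: A rooted tree with root $v_0$ is spherically symmetric with branching degrees $(d_r)$ if every vertex at distance $r$ from $v_0$ has exactly $d_r$ neighbours at distance $r+1$. $|v|$ is the distance to $v_0$, $S_r=\{v:|v|=r\}$, $\ell^2(S_r)\subset\ell^2(V)$ the functions vanishing off $S_r$; for $v\ne v_0$, $v_-$ is the neighbour of $v$ closer to $v_0$. $H$ is the operator on $\ell^2(V)$ with $(H\xi)(v)=\xi(v_-)$ for $v\ne v_0$ and $(H\xi)(v_0)=0$. Define $\mathcal U_{0,0}=\ell^2(S_0)$ and $\mathcal U_{0,r}=H^r(\mathcal U_{0,0})$; inductively for $n\ge1$, $\mathcal U_{n,n}$ is the orthogonal complement of $\mathcal U_{0,n}\oplus\cdots\oplus\mathcal U_{n-1,n}$ in $\ell^2(S_n)$, $\mathcal U_{n,r}=H^{r-n}(\mathcal U_{n,n})$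 for $r\ge n$; and $\mathcal V_n=\bigoplus_{r\ge n}\mathcal U_{n,r}$. *)

theory Defs
  imports "HOL-Analysis.Analysis" "HOL-Library.Function_Algebras"
begin

text \<open>A rooted tree with vertex set V and root v0 is given by the parent map
  p (p v is v_- for v \<noteq> v0).\<close>

definition depth :: "'v \<Rightarrow> ('v \<Rightarrow> 'v) \<Rightarrow> 'v \<Rightarrow> nat" where
  "depth v0 p v = (LEAST n. (p ^^ n) v = v0)"

definition children :: "'v set \<Rightarrow> 'v \<Rightarrow> ('v \<Rightarrow> 'v) \<Rightarrow> 'v \<Rightarrow> 'v set" where
  "children V v0 p v = {w \<in> V. w \<noteq> v0 \<and> p w = v}"

definition sph_sym_tree :: "'v set \<Rightarrow> 'v \<Rightarrow> ('v \<Rightarrow> 'v) \<Rightarrow> (nat \<Rightarrow> nat) \<Rightarrow> bool" where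
  "sph_sym_tree V v0 p d \<longleftrightarrow>
     v0 \<in> V \<and>
     (\<forall>v\<in>V. v \<noteq> v0 \<longrightarrow> p v \<in> V) \<and>
     (\<forall>v\<in>V. \<exists>n. (p ^^ n) v = v0) \<and>
     (\<forall>v\<in>V. finite (children V v0 p v) \<and> card (children V v0 p v) = d (depth v0 p v))"

definition sphere :: "'v set \<Rightarrow> 'v \<Rightarrow> ('v \<Rightarrow> 'v) \<Rightarrow> nat \<Rightarrow> 'v set" where
  "sphere V v0 p r = {v \<in> V. depth v0 p v = r}"

definition cscale :: "complex \<Rightarrow> ('v \<Rightarrow> complex) \<Rightarrow> ('v \<Rightarrow> complex)" where
  "cscale c f = (\<lambda>v. c * f v)"

definition cspan :: "('v \<Rightarrow> complex) set \<Rightarrow> ('v \<Rightarrow> complex) set" where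
  "cspan = module.span cscale"

definition cdim :: "('v \<Rightarrow> complex) set \<Rightarrow> nat" where
  "cdim = vector_space.dim cscale"

definition l2 :: "'v set \<Rightarrow> ('v \<Rightarrow> complex) set" where
  "l2 A = {f. (\<forall>v. v \<notin> A \<longrightarrow> f v = 0) \<and> (\<lambda>v. (cmod (f v))\<^sup>2) summable_on A}"

definition l2inner :: "('v \<Rightarrow> complex) \<Rightarrow> ('v \<Rightarrow> complex) \<Rightarrow> complex" where
  "l2inner f g = infsum (\<lambda>v. f v * cnj (g v)) UNIV"

definition Hop :: "'v set \<Rightarrow> 'v \<Rightarrow> ('v \<Rightarrow> 'v) \<Rightarrow> ('v \<Rightarrow> complex) \<Rightarrow> ('v \<Rightarrow> complex)" where
  "Hop V v0 p \<xi> = (\<lambda>v. if v \<in> V \<and> v \<noteq> v0 then \<xi> (p v) else 0)"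

text \<open>Udiag n = U_{n,n}: the orthogonal complement in l^2(S_n) of
  U_{0,n} + ... + U_{n-1,n}, where U_{k,n} = H^(n-k)(U_{k,k}).
  For n = 0 this is l^2(S_0).\<close>
function Udiag :: "'v set \<Rightarrow> 'v \<Rightarrow> ('v \<Rightarrow> 'v) \<Rightarrow> nat \<Rightarrow> ('v \<Rightarrow> complex) set" where
  "Udiag V v0 p n =
     {\<xi> \<in> l2 (sphere V v0 p n).
        \<forall>\<eta> \<in> cspan (\<Union>k\<in>{..<n}. (Hop V v0 p ^^ (n - k)) ` Udiag V v0 p k). l2inner \<xi> \<eta> = 0}"
  by pat_completeness auto
termination
  by (relation "Wellfounded.measure (\<lambda>(V, v0, p, n). n)") auto

text \<open>U_{n,r} = H^(r-n)(U_{n,n}) (meaningful for r \<ge> n).\<close>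
definition Usp :: "'v set \<Rightarrow> 'v \<Rightarrow> ('v \<Rightarrow> 'v) \<Rightarrow> nat \<Rightarrow> nat \<Rightarrow> ('v \<Rightarrow> complex) set" where
  "Usp V v0 p n r = (Hop V v0 p ^^ (r - n)) ` Udiag V v0 p n"

text \<open>V_n = Hilbert (orthogonal) direct sum of U_{n,r}, r \<ge> n, inside l^2(V).
  Since the U_{n,r} are supported on the pairwise disjoint spheres S_r, this is the
  set of l^2 functions vanishing on S_r for r < n whose restriction to S_r lies in
  U_{n,r} for every r \<ge> n.\<close>
definition Vsp :: "'v set \<Rightarrow> 'v \<Rightarrow> ('v \<Rightarrow> 'v) \<Rightarrow> nat \<Rightarrow> ('v \<Rightarrow> complex) set" where
  "Vsp V v0 p n = {\<xi> \<in> l2 V.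
      (\<forall>r<n. \<forall>v\<in>sphere V v0 p r. \<xi> v = 0) \<and>
      (\<forall>r\<ge>n. (\<lambda>v. if v \<in> sphere V v0 p r then \<xi> v else 0) \<in> Usp V v0 p n r)}"

end

theory Submission
  imports Defs
begin

(* The sphere S_(n+1) is the disjoint union of the children of the vertices of S_n, so
   |S_(n+1)| = d_n |S_n|, and l^2(S_n) is the space of functions vanishing off the finite set S_n,
   of dimension |S_n|.  Since every vertex has a child, H maps the functions on S_n injectively to
   functions on S_(n+1).  Write W_n = U_(0,n) + ... + U_(n-1,n), so that U_(n,n) is the orthogonal
   complement of W_n in l^2(S_n).  Then W_(n+1) = H (W_n + U_(n,n)) = H (l^2(S_n)) has dimension
   |S_n|, hence dim U_(n+1,n+1) = |S_(n+1)| - |S_n|, and the injective maps H^(r-n) give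
   dim U_(n,r) = dim U_(n,n).  If d_(n-1) >= 2 then U_(n,n) is nonzero, and nonzero vectors of the
   U_(n,r), r >= n, lie in V_n and are supported on disjoint spheres, hence linearly independent. *)

section \<open>Direct sums and injective images in vector spaces\<close>

context vector_space
begin

lemma independent_Un_span_disjoint:
  assumes "finite C" "independent B" "independent C" "span B \<inter> span C \<subseteq> {0}"
  shows "independent (B \<union> C)"
  using assms(1,3,4)
proof (induction C rule: finite_induct)
  case empty
  then show ?case using assms(2) by simp
next
  case (insert c C)
  have C: "independent C" "c \<notin> span C"
    using insert.prems(1) insert.hyps(2) by (auto simp: independent_insert)
  have span_C: "span C \<subseteq> span (insert c C)" by (rule span_mono) auto
  then have "independent (B \<union> C)" using insert.IH insert.prems(2) C(1) by blast
  moreover have "c \<notin> span (B \<union> C)"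
  proof
    assume "c \<in> span (B \<union> C)"
    then obtain x y where xy: "c = x + y" "x \<in> span B" "y \<in> span C"
      by (auto simp: span_Un)
    have "x = c - y" using xy(1) by simp
    also have "\<dots> \<in> span (insert c C)"
      using xy(3) span_C by (auto intro: span_diff span_base)
    finally have "x = 0" using insert.prems(2) xy(2) by blast
    then show False using xy C(2) by simp
  qed
  ultimately show ?case using independent_insertI by simp
qed

lemma dim_Un_span_disjoint:
  assumes W: "finite W" "S \<subseteq> span W" "T \<subseteq> span W"
    and disjoint: "span S \<inter> span T \<subseteq> {0}"
  shows "dim (S \<union> T) = dim S + dim T"
proof -
  obtain B where B: "B \<subseteq> S" "independent B" "S \<subseteq> span B" "card B = dim S"
    by (rule basis_exists)
  obtain C where C: "C \<subseteq> T" "independent C" "T \<subseteq> span C" "card C = dim T"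
    by (rule basis_exists)
  have finite: "finite B" "finite C"
    using independent_span_bound[OF W(1)] B(1,2) C(1,2) W(2,3) by blast+
  have span_BC: "span B \<inter> span C \<subseteq> {0}"
    using disjoint span_mono[OF B(1)] span_mono[OF C(1)] by blast
  have "B \<inter> C = {}"
    using span_BC span_base dependent_zero[of B] B(2) by blast
  then have "card (B \<union> C) = dim S + dim T"
    using card_Un_disjoint[OF finite] B(4) C(4) by simp
  moreover have "card (B \<union> C) = dim (S \<union> T)"
  proof (rule basis_card_eq_dim)
    show "independent (B \<union> C)"
      using independent_Un_span_disjoint finite(2) B(2) C(2) span_BC by blast
    show "S \<union> T \<subseteq> span (B \<union> C)"
      using B(3) C(3) span_mono[of B "B \<union> C"] span_mono[of C "B \<union> C"] by blast
  qed (use B(1) C(1) in blast)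
  ultimately show ?thesis by simp
qed

end

lemma (in vector_space_pair) dim_image_inj_on:
  assumes "Vector_Spaces.linear s1 s2 f" and inj: "inj_on f (vs1.span S)"
  shows "vs2.dim (f ` S) = vs1.dim S"
proof -
  interpret f: Vector_Spaces.linear s1 s2 f by fact
  obtain B where B: "B \<subseteq> S" "vs1.independent B" "S \<subseteq> vs1.span B" "card B = vs1.dim S"
    by (rule vs1.basis_exists)
  have inj_B: "inj_on f (vs1.span B)" using inj vs1.span_mono[OF B(1)] inj_on_subset by blast
  have "card (f ` B) = vs2.dim (f ` S)"
  proof (rule vs2.basis_card_eq_dim)
    show "vs2.independent (f ` B)" using f.independent_injective_image[OF B(2) inj_B] .
    show "f ` S \<subseteq> vs2.span (f ` B)" using f.spans_image[OF B(3)] .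
  qed (use B(1) in blast)
  moreover have "card (f ` B) = card B"
    using inj_B vs1.span_superset inj_on_subset card_image by metis
  ultimately show ?thesis using B(4) by simp
qed

section \<open>Functions vanishing off a finite set\<close>

interpretation cs: vector_space cscale
  by unfold_locales (auto simp: cscale_def fun_eq_iff algebra_simps)

interpretation cs: vector_space_pair cscale cscale ..

lemma cscale_apply: "cscale c f v = c * f v"
  by (simp add: cscale_def)

lemma sum_fun_apply: "(sum f A) v = (\<Sum>x\<in>A. f x v)"
  by (induction A rule: infinite_finite_induct) auto

definition vanishing_off :: "'v set \<Rightarrow> ('v \<Rightarrow> complex) set" where
  "vanishing_off A = {f. \<forall>v. v \<notin> A \<longrightarrow> f v = 0}"

definition inner_on :: "'v set \<Rightarrow> ('v \<Rightarrow> complex) \<Rightarrow> ('v \<Rightarrow> complex) \<Rightarrow> complex" where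
  "inner_on A f g = (\<Sum>v\<in>A. f v * cnj (g v))"

lemma subspace_vanishing_off: "cs.subspace (vanishing_off A)"
  unfolding cs.subspace_def vanishing_off_def by (auto simp: cscale_apply)

lemma span_subset_vanishing_off: "X \<subseteq> vanishing_off A \<Longrightarrow> cs.span X \<subseteq> vanishing_off A"
  using cs.span_minimal subspace_vanishing_off by blast

lemma vanishing_off_subset_span_indicators:
  assumes "finite A"
  shows "vanishing_off A \<subseteq> cs.span ((\<lambda>a. indicator {a}) ` A)"
proof
  fix f assume f: "f \<in> vanishing_off A"
  have "f = (\<Sum>a\<in>A. cscale (f a) (indicator {a}))"
    using f assms
    by (auto simp: fun_eq_iff sum_fun_apply cscale_apply vanishing_off_def indicator_def of_bool_def if_distrib
        cong: if_cong)
  also have "\<dots> \<in> cs.span ((\<lambda>a. indicator {a}) ` A)"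
    by (intro cs.span_sum cs.span_scale cs.span_base) auto
  finally show "f \<in> cs.span ((\<lambda>a. indicator {a}) ` A)" .
qed

lemma independent_indicators:
  assumes "finite A"
  shows "cs.independent ((\<lambda>a. indicator {a} :: 'v \<Rightarrow> complex) ` A)"
proof (rule cs.independent_if_scalars_zero)
  show "finite ((\<lambda>a. indicator {a}) ` A)" using assms by simp
next
  fix g and x :: "'v \<Rightarrow> complex"
  assume sum: "(\<Sum>x\<in>(\<lambda>a. indicator {a}) ` A. cscale (g x) x) = 0"
    and x: "x \<in> (\<lambda>a. indicator {a}) ` A"
  then obtain a where a: "a \<in> A" "x = indicator {a}" by auto
  have inj: "inj_on (\<lambda>a. indicator {a} :: 'v \<Rightarrow> complex) A"
    by (auto simp: inj_on_def fun_eq_iff indicator_def split: if_splits)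
  have "0 = (\<Sum>x\<in>(\<lambda>a. indicator {a}) ` A. cscale (g x) x) a" using sum by simp
  also have "\<dots> = (\<Sum>b\<in>A. if b = a then g (indicator {b}) else 0)"
    unfolding sum_fun_apply sum.reindex[OF inj] by (intro sum.cong) (auto simp: cscale_apply)
  also have "\<dots> = g (indicator {a})"
    using assms a(1) by simp
  finally show "g x = 0" using a(2) by simp
qed

lemma dim_vanishing_off:
  fixes A :: "'v set"
  assumes "finite A"
  shows "cs.dim (vanishing_off A) = card A"
proof -
  have "inj_on (\<lambda>a. indicator {a} :: 'v \<Rightarrow> complex) A"
    by (auto simp: inj_on_def fun_eq_iff indicator_def split: if_splits)
  moreover have "(\<lambda>a. indicator {a} :: 'v \<Rightarrow> complex) ` A \<subseteq> vanishing_off A"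
    by (auto simp: vanishing_off_def split: split_indicator)
  ultimately show ?thesis
    using cs.basis_card_eq_dim vanishing_off_subset_span_indicators[OF assms]
      independent_indicators[OF assms] card_image by metis
qed

lemma inner_on_add_left: "inner_on A (x + y) z = inner_on A x z + inner_on A y z"
  by (simp add: inner_on_def sum.distrib algebra_simps)

lemma inner_on_diff_left: "inner_on A (x - y) z = inner_on A x z - inner_on A y z"
  by (simp add: inner_on_def sum_subtractf algebra_simps)

lemma inner_on_scale_left: "inner_on A (cscale c x) z = c * inner_on A x z"
  by (simp add: inner_on_def sum_distrib_left algebra_simps cscale_apply)

lemma inner_on_add_right: "inner_on A z (x + y) = inner_on A z x + inner_on A z y"
  by (simp add: inner_on_def sum.distrib algebra_simps)

lemma inner_on_scale_right: "inner_on A z (cscale c x) = cnj c * inner_on A z x"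
  by (simp add: inner_on_def sum_distrib_left algebra_simps cscale_apply)

lemma inner_on_zero_left [simp]: "inner_on A 0 z = 0"
  and inner_on_zero_right [simp]: "inner_on A z 0 = 0"
  by (simp_all add: inner_on_def)

lemma inner_on_self_eq_0:
  assumes "finite A" "x \<in> vanishing_off A" "inner_on A x x = 0"
  shows "x = 0"
proof -
  have "inner_on A x x = of_real (\<Sum>v\<in>A. (cmod (x v))\<^sup>2)"
    by (simp add: inner_on_def complex_mult_cnj cmod_power2)
  with assms(3) have "(\<Sum>v\<in>A. (cmod (x v))\<^sup>2) = 0"
    by (metis of_real_eq_0_iff)
  then have "\<forall>v\<in>A. (cmod (x v))\<^sup>2 = 0"
    using assms(1) by (subst (asm) sum_nonneg_eq_0_iff) auto
  then show ?thesis using assms(2) by (auto simp: vanishing_off_def fun_eq_iff)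
qed

lemma inner_on_orthogonal_span:
  assumes "\<And>b. b \<in> B \<Longrightarrow> inner_on A y b = 0" "z \<in> cs.span B"
  shows "inner_on A y z = 0"
  using assms(2)
proof (rule cs.span_induct)
  show "cs.subspace {z. inner_on A y z = 0}"
    unfolding cs.subspace_def by (simp add: inner_on_add_right inner_on_scale_right)
qed (use assms(1) in auto)

text \<open>Gram--Schmidt: subtract from the new vector its projection onto the span of the others.\<close>

lemma orthogonal_projection_exists:
  assumes A: "finite A" and B: "finite B" "B \<subseteq> vanishing_off A" and x: "x \<in> vanishing_off A"
  shows "\<exists>w\<in>cs.span B. \<forall>b\<in>B. inner_on A (x - w) b = 0"
  using B x
proof (induction B arbitrary: x rule: finite_induct)
  case empty
  then show ?case using cs.span_zero by auto
next
  case (insert b B)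
  have span_B: "cs.span B \<subseteq> cs.span (insert b B)" by (rule cs.span_mono) auto
  obtain w where w: "w \<in> cs.span B" "\<forall>c\<in>B. inner_on A (x - w) c = 0"
    using insert.IH[of x] insert.prems by blast
  obtain w' where w': "w' \<in> cs.span B" "\<forall>c\<in>B. inner_on A (b - w') c = 0"
    using insert.IH[of b] insert.prems by blast
  define b' where "b' = b - w'"
  have b'_vanishing: "b' \<in> vanishing_off A"
    unfolding b'_def using insert.prems(1) w'(1) span_subset_vanishing_off[of B A]
      cs.subspace_diff[OF subspace_vanishing_off] by auto
  have b'_span: "b' \<in> cs.span (insert b B)"
    unfolding b'_def using w'(1) span_B by (blast intro: cs.span_diff cs.span_base)
  show ?case
  proof (cases "inner_on A b' b' = 0")
    case True
    then have "b = w'" using inner_on_self_eq_0[OF A b'_vanishing] b'_def by simp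
    then have "inner_on A (x - w) b = 0"
      using inner_on_orthogonal_span[of B A "x - w" w'] w(2) w'(1) by blast
    then show ?thesis using w span_B by blast
  next
    case False
    define c where "c = inner_on A (x - w) b' / inner_on A b' b'"
    define w'' where "w'' = w + cscale c b'"
    have x_w'': "x - w'' = (x - w) - cscale c b'" by (simp add: w''_def)
    have orth_B: "\<forall>c'\<in>B. inner_on A (x - w'') c' = 0"
      using w(2) w'(2) by (simp add: x_w'' b'_def inner_on_diff_left inner_on_scale_left)
    then have "inner_on A (x - w'') w' = 0"
      using inner_on_orthogonal_span w'(1) by blast
    moreover have "inner_on A (x - w'') b' = 0"
      using False by (simp add: x_w'' c_def inner_on_diff_left[of A "x - w"] inner_on_scale_left)
    moreover have "b = w' + b'" by (simp add: b'_def)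
    ultimately have "inner_on A (x - w'') b = 0" by (simp add: inner_on_add_right)
    moreover have "w'' \<in> cs.span (insert b B)"
      unfolding w''_def using w(1) span_B b'_span by (blast intro: cs.span_add cs.span_scale)
    ultimately show ?thesis using orth_B by blast
  qed
qed

definition orth_compl :: "'v set \<Rightarrow> ('v \<Rightarrow> complex) set \<Rightarrow> ('v \<Rightarrow> complex) set" where
  "orth_compl A X = {\<xi> \<in> vanishing_off A. \<forall>\<eta>\<in>cs.span X. inner_on A \<xi> \<eta> = 0}"

lemma subspace_orth_compl: "cs.subspace (orth_compl A X)"
  using subspace_vanishing_off[of A] unfolding cs.subspace_def orth_compl_def
  by (auto simp: inner_on_add_left inner_on_scale_left)

lemma finite_independent_vanishing_off:
  assumes "finite A" "B \<subseteq> vanishing_off A" "cs.independent B"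
  shows "finite B"
  using cs.independent_span_bound[of "(\<lambda>a. indicator {a}) ` A" B] assms
    vanishing_off_subset_span_indicators[OF assms(1)] by auto

lemma span_Un_orth_compl:
  assumes A: "finite A" and X: "X \<subseteq> vanishing_off A"
  shows "cs.span (X \<union> orth_compl A X) = vanishing_off A"
proof
  show "cs.span (X \<union> orth_compl A X) \<subseteq> vanishing_off A"
    using X by (intro span_subset_vanishing_off) (auto simp: orth_compl_def)
next
  show "vanishing_off A \<subseteq> cs.span (X \<union> orth_compl A X)"
  proof
    fix x assume x: "x \<in> vanishing_off A"
    obtain B where B: "B \<subseteq> X" "cs.independent B" "X \<subseteq> cs.span B" "card B = cs.dim X"
      by (rule cs.basis_exists)
    have "finite B" using finite_independent_vanishing_off[OF A _ B(2)] B(1) X by blast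
    then obtain w where w: "w \<in> cs.span B" "\<forall>b\<in>B. inner_on A (x - w) b = 0"
      using orthogonal_projection_exists[OF A _ _ x] B(1) X by blast
    have span_B: "cs.span B = cs.span X"
      using cs.span_mono[OF B(1)] cs.span_minimal[OF B(3) cs.subspace_span] by blast
    have "w \<in> vanishing_off A"
      using w(1) span_B span_subset_vanishing_off[OF X] by blast
    then have "x - w \<in> vanishing_off A"
      using x cs.subspace_diff[OF subspace_vanishing_off] by blast
    then have "x - w \<in> orth_compl A X"
      using inner_on_orthogonal_span[of B A "x - w"] w(2) span_B by (auto simp: orth_compl_def)
    then have "x - w \<in> cs.span (X \<union> orth_compl A X)" by (simp add: cs.span_base)
    moreover have "w \<in> cs.span (X \<union> orth_compl A X)"
      using w(1) span_B cs.span_mono[of X "X \<union> orth_compl A X"] by blast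
    ultimately have "(x - w) + w \<in> cs.span (X \<union> orth_compl A X)" by (rule cs.span_add)
    then show "x \<in> cs.span (X \<union> orth_compl A X)" by simp
  qed
qed

lemma dim_orth_compl:
  assumes A: "finite A" and X: "X \<subseteq> vanishing_off A"
  shows "cs.dim (orth_compl A X) + cs.dim X = card A"
proof -
  have orth_vanishing: "orth_compl A X \<subseteq> vanishing_off A" by (auto simp: orth_compl_def)
  have "cs.span X \<inter> cs.span (orth_compl A X) \<subseteq> {0}"
  proof
    fix y assume y: "y \<in> cs.span X \<inter> cs.span (orth_compl A X)"
    then have "y \<in> orth_compl A X"
      using cs.span_minimal[OF order_refl subspace_orth_compl] by blast
    then show "y \<in> {0}"
      using y inner_on_self_eq_0[OF A] by (auto simp: orth_compl_def)
  qed
  then have "cs.dim (X \<union> orth_compl A X) = cs.dim X + cs.dim (orth_compl A X)"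
  proof (rule cs.dim_Un_span_disjoint[rotated 3])
    show "finite ((\<lambda>a. indicator {a}) ` A)" using A by simp
    show "X \<subseteq> cs.span ((\<lambda>a. indicator {a}) ` A)"
      using X vanishing_off_subset_span_indicators[OF A] by blast
    show "orth_compl A X \<subseteq> cs.span ((\<lambda>a. indicator {a}) ` A)"
      using orth_vanishing vanishing_off_subset_span_indicators[OF A] by blast
  qed
  moreover have "cs.dim (X \<union> orth_compl A X) = card A"
    using span_Un_orth_compl[OF A X] dim_vanishing_off[OF A] cs.dim_span by metis
  ultimately show ?thesis by simp
qed

lemma independent_disjoint_supports:
  assumes "finite I" "disjoint_family_on A I"
    and "\<And>i. i \<in> I \<Longrightarrow> e i \<in> vanishing_off (A i)" "\<And>i. i \<in> I \<Longrightarrow> e i \<noteq> 0"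
  shows "cs.independent (e ` I) \<and> card (e ` I) = card I"
  using assms
proof (induction I rule: finite_induct)
  case empty
  then show ?case by (simp add: cs.independent_empty)
next
  case (insert i I)
  have "cs.span (e ` I) \<subseteq> vanishing_off (\<Union>j\<in>I. A j)"
    using insert.prems(2) by (intro span_subset_vanishing_off) (auto simp: vanishing_off_def)
  moreover have "e i \<notin> vanishing_off (\<Union>j\<in>I. A j)"
  proof
    assume "e i \<in> vanishing_off (\<Union>j\<in>I. A j)"
    moreover have "A i \<inter> A j = {}" if "j \<in> I" for j
      using insert.prems(1) insert.hyps(2) that by (auto simp: disjoint_family_on_def)
    ultimately have "e i = 0"
      using insert.prems(2)[of i] by (auto simp: vanishing_off_def fun_eq_iff)
    then show False using insert.prems(3) by simp
  qed
  ultimately have "e i \<notin> cs.span (e ` I)" by blast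
  moreover have "disjoint_family_on A I"
    using insert.prems(1) by (auto simp: disjoint_family_on_def)
  ultimately show ?case
    using insert cs.span_base[of "e i" "e ` I"]
    by (auto simp: cs.independent_insert card_insert_disjoint)
qed

lemma l2_finite: "finite A \<Longrightarrow> l2 A = vanishing_off A"
  by (auto simp: l2_def vanishing_off_def)

lemma vanishing_off_subset_l2:
  assumes "finite A" "A \<subseteq> B"
  shows "vanishing_off A \<subseteq> l2 B"
proof
  fix f assume f: "f \<in> vanishing_off A"
  have "(\<lambda>v. (cmod (f v))\<^sup>2) summable_on B \<longleftrightarrow> (\<lambda>v. (cmod (f v))\<^sup>2) summable_on A"
    by (rule summable_on_cong_neutral) (use assms f in \<open>auto simp: vanishing_off_def\<close>)
  then show "f \<in> l2 B" using assms f by (auto simp: l2_def vanishing_off_def)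
qed

lemma l2inner_eq_inner_on:
  assumes "finite A" "f \<in> vanishing_off A"
  shows "l2inner f g = inner_on A f g"
proof -
  have "l2inner f g = infsum (\<lambda>v. f v * cnj (g v)) A"
    unfolding l2inner_def
    by (rule infsum_cong_neutral) (use assms in \<open>auto simp: vanishing_off_def\<close>)
  then show ?thesis using assms(1) by (simp add: inner_on_def)
qed

section \<open>Spherically symmetric trees\<close>

lemma depth_parent:
  assumes "v \<noteq> v0" "(p ^^ n) v = v0"
  shows "depth v0 p v = Suc (depth v0 p (p v))"
proof -
  have "depth v0 p v = Suc (LEAST m. (p ^^ Suc m) v = v0)"
    unfolding depth_def using assms by (intro Least_Suc) auto
  also have "(\<lambda>m. (p ^^ Suc m) v = v0) = (\<lambda>m. (p ^^ m) (p v) = v0)"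
    by (simp only: funpow_Suc_right o_apply)
  finally show ?thesis unfolding depth_def .
qed

lemma depth_eq_0_iff:
  assumes "(p ^^ n) v = v0"
  shows "depth v0 p v = 0 \<longleftrightarrow> v = v0"
  using LeastI[of "\<lambda>n. (p ^^ n) v = v0", OF assms] by (auto simp: depth_def)

lemma linear_Hop: "Vector_Spaces.linear cscale cscale (Hop V v0 p)"
  unfolding Vector_Spaces.linear_iff
  by (simp add: Hop_def fun_eq_iff cscale_def cs.vector_space_axioms)

lemma linear_Hop_pow: "Vector_Spaces.linear cscale cscale (Hop V v0 p ^^ j)"
proof (induction j)
  case 0
  then show ?case using cs.linear_ident by (simp add: id_def)
next
  case (Suc j)
  then show ?case
    unfolding funpow.simps(2) by (rule Vector_Spaces.linear_compose[OF _ linear_Hop])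
qed

declare Udiag.simps [simp del]

locale sph_tree =
  fixes V :: "'v set" and v0 :: 'v and p :: "'v \<Rightarrow> 'v" and d :: "nat \<Rightarrow> nat"
  assumes tree: "sph_sym_tree V v0 p d"
    and degree_pos: "\<And>r. 0 < d r"
begin

abbreviation "Sph n \<equiv> sphere V v0 p n"
abbreviation "H \<equiv> Hop V v0 p"
abbreviation "U n \<equiv> Udiag V v0 p n"
abbreviation "children_of v \<equiv> children V v0 p v"

lemma root_in_V: "v0 \<in> V"
  and parent_in_V: "v \<in> V \<Longrightarrow> v \<noteq> v0 \<Longrightarrow> p v \<in> V"
  and reaches_root: "v \<in> V \<Longrightarrow> \<exists>n. (p ^^ n) v = v0"
  and finite_children: "v \<in> V \<Longrightarrow> finite (children_of v)"
  and card_children: "v \<in> V \<Longrightarrow> card (children_of v) = d (depth v0 p v)"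
  using tree unfolding sph_sym_tree_def by auto

lemma sphere_0: "Sph 0 = {v0}"
proof -
  have "v \<in> Sph 0 \<longleftrightarrow> v = v0" for v
  proof
    assume "v \<in> Sph 0"
    then have "v \<in> V" "depth v0 p v = 0" by (auto simp: sphere_def)
    then show "v = v0" using reaches_root depth_eq_0_iff by metis
  next
    assume "v = v0"
    then show "v \<in> Sph 0" using root_in_V by (simp add: sphere_def depth_def)
  qed
  then show ?thesis by blast
qed

lemma sphere_Suc: "Sph (Suc n) = (\<Union>u\<in>Sph n. children_of u)"
proof -
  have "w \<in> Sph (Suc n) \<longleftrightarrow> (\<exists>u\<in>Sph n. w \<in> children_of u)" for w
  proof (cases "w \<in> V \<and> w \<noteq> v0")
    case True
    then obtain m where "(p ^^ m) w = v0" using reaches_root by blast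
    then have "depth v0 p w = Suc (depth v0 p (p w))"
      using True depth_parent by metis
    then have "w \<in> Sph (Suc n) \<longleftrightarrow> p w \<in> Sph n"
      using True parent_in_V by (simp add: sphere_def)
    then show ?thesis using True by (simp add: children_def)
  next
    case False
    have "depth v0 p v0 = 0" by (simp add: depth_def)
    then show ?thesis using False by (auto simp: sphere_def children_def)
  qed
  then show ?thesis by blast
qed

lemma finite_sphere: "finite (Sph n)"
  and card_sphere: "card (Sph n) = (\<Prod>q<n. d q)"
proof (induction n)
  case 0
  { case 1 show ?case by (simp add: sphere_0) }
  { case 2 show ?case by (simp add: sphere_0) }
next
  case (Suc n)
  have fin: "\<forall>u\<in>Sph n. finite (children_of u)"
    using finite_children by (auto simp: sphere_def)
  { case 1 show ?case unfolding sphere_Suc using Suc.IH(1) fin by blast }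
  { case 2
    have "card (Sph (Suc n)) = (\<Sum>u\<in>Sph n. card (children_of u))"
      unfolding sphere_Suc using Suc.IH(1) fin
      by (intro card_UN_disjoint) (auto simp: children_def)
    also have "\<dots> = (\<Sum>u\<in>Sph n. d n)"
      by (rule sum.cong) (auto simp: card_children sphere_def)
    finally show ?case using Suc.IH(2) by simp }
qed

lemma Hop_vanishing_off_sphere:
  assumes "\<xi> \<in> vanishing_off (Sph n)"
  shows "H \<xi> \<in> vanishing_off (Sph (Suc n))"
  unfolding vanishing_off_def mem_Collect_eq
proof (intro allI impI)
  fix v assume v: "v \<notin> Sph (Suc n)"
  show "H \<xi> v = 0"
  proof (cases "v \<in> V \<and> v \<noteq> v0")
    case True
    then have "p v \<notin> Sph n"
      using v sphere_Suc by (auto simp: children_def)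
    then show ?thesis using assms by (simp add: Hop_def vanishing_off_def)
  next
    case False
    then show ?thesis by (auto simp: Hop_def)
  qed
qed

lemma Hop_pow_vanishing_off_sphere:
  "\<xi> \<in> vanishing_off (Sph n) \<Longrightarrow> (H ^^ j) \<xi> \<in> vanishing_off (Sph (n + j))"
  by (induction j) (simp_all add: Hop_vanishing_off_sphere)

lemma inj_on_Hop: "inj_on H (vanishing_off (Sph n))"
proof (rule inj_onI)
  fix x y assume x: "x \<in> vanishing_off (Sph n)" and y: "y \<in> vanishing_off (Sph n)"
    and eq: "H x = H y"
  show "x = y"
  proof
    fix v
    show "x v = y v"
    proof (cases "v \<in> Sph n")
      case True
      then have "card (children_of v) > 0"
        using card_children degree_pos by (simp add: sphere_def)
      then obtain w where "w \<in> children_of v" by (metis card_gt_0_iff ex_in_conv)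
      then show ?thesis using fun_cong[OF eq, of w] by (auto simp: Hop_def children_def)
    next
      case False
      then show ?thesis using x y by (simp add: vanishing_off_def)
    qed
  qed
qed

lemma inj_on_Hop_pow: "inj_on (H ^^ j) (vanishing_off (Sph n))"
proof (induction j)
  case 0
  then show ?case by simp
next
  case (Suc j)
  have "(H ^^ j) ` vanishing_off (Sph n) \<subseteq> vanishing_off (Sph (n + j))"
    using Hop_pow_vanishing_off_sphere by blast
  then have "inj_on H ((H ^^ j) ` vanishing_off (Sph n))"
    using inj_on_Hop inj_on_subset by blast
  then show ?case unfolding funpow.simps(2) by (rule comp_inj_on[OF Suc.IH])
qed

definition Uprior :: "nat \<Rightarrow> ('v \<Rightarrow> complex) set" where
  "Uprior n = (\<Union>k<n. Usp V v0 p k n)"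

lemma Udiag_unfold:
  "U n = {\<xi> \<in> vanishing_off (Sph n). \<forall>\<eta>\<in>cs.span (Uprior n). l2inner \<xi> \<eta> = 0}"
  unfolding Uprior_def Usp_def l2_finite[OF finite_sphere, symmetric] cspan_def[symmetric]
  by (rule Udiag.simps)

lemma Udiag_subset_vanishing_off: "U n \<subseteq> vanishing_off (Sph n)"
  using Udiag_unfold by blast

lemma Usp_subset_vanishing_off:
  assumes "n \<le> r"
  shows "Usp V v0 p n r \<subseteq> vanishing_off (Sph r)"
proof -
  have "(H ^^ (r - n)) ` U n \<subseteq> vanishing_off (Sph (n + (r - n)))"
    using Hop_pow_vanishing_off_sphere Udiag_subset_vanishing_off by blast
  then show ?thesis using assms by (simp add: Usp_def)
qed

lemma Uprior_subset_vanishing_off: "Uprior n \<subseteq> vanishing_off (Sph n)"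
  unfolding Uprior_def using Usp_subset_vanishing_off by (meson UN_least lessThan_iff less_imp_le)

lemma Udiag_eq_orth_compl: "U n = orth_compl (Sph n) (Uprior n)"
proof -
  have "l2inner \<xi> \<eta> = inner_on (Sph n) \<xi> \<eta>" if "\<xi> \<in> vanishing_off (Sph n)" for \<xi> \<eta>
    using l2inner_eq_inner_on[OF finite_sphere that] .
  then show ?thesis unfolding Udiag_unfold orth_compl_def by auto
qed

lemma Uprior_Suc: "Uprior (Suc n) = H ` (Uprior n \<union> U n)"
proof -
  have Usp_Suc: "Usp V v0 p k (Suc n) = H ` Usp V v0 p k n" if "k \<le> n" for k
    using that by (simp add: Usp_def Suc_diff_le image_comp)
  have "Uprior (Suc n) = Usp V v0 p n (Suc n) \<union> (\<Union>k<n. Usp V v0 p k (Suc n))"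
    by (simp add: Uprior_def lessThan_Suc)
  also have "\<dots> = H ` U n \<union> (\<Union>k<n. H ` Usp V v0 p k n)"
    using Usp_Suc by (simp add: Usp_def)
  also have "\<dots> = H ` (Uprior n \<union> U n)"
    by (auto simp: Uprior_def)
  finally show ?thesis .
qed

lemma span_Uprior_Un_Udiag: "cs.span (Uprior n \<union> U n) = vanishing_off (Sph n)"
  using span_Un_orth_compl[OF finite_sphere Uprior_subset_vanishing_off]
  by (simp add: Udiag_eq_orth_compl)

lemma dim_Udiag_add_dim_Uprior: "cs.dim (U n) + cs.dim (Uprior n) = card (Sph n)"
  using dim_orth_compl[OF finite_sphere Uprior_subset_vanishing_off]
  by (simp add: Udiag_eq_orth_compl)

lemma dim_Uprior_Suc: "cs.dim (Uprior (Suc n)) = card (Sph n)"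
proof -
  have "cs.dim (Uprior (Suc n)) = cs.dim (Uprior n \<union> U n)"
    unfolding Uprior_Suc
    by (rule cs.dim_image_inj_on[OF linear_Hop]) (simp add: span_Uprior_Un_Udiag inj_on_Hop)
  also have "\<dots> = card (Sph n)"
    using span_Uprior_Un_Udiag dim_vanishing_off[OF finite_sphere] cs.dim_span by metis
  finally show ?thesis .
qed

lemma dim_Udiag_0: "cs.dim (U 0) = 1"
  using dim_Udiag_add_dim_Uprior[of 0]
  by (simp add: Uprior_def sphere_0 cs.dim_eq_card_independent[OF cs.independent_empty])

lemma dim_Udiag_Suc: "cs.dim (U (Suc n)) = card (Sph (Suc n)) - card (Sph n)"
  using dim_Udiag_add_dim_Uprior[of "Suc n"] dim_Uprior_Suc[of n] by simp

lemma dim_Usp: "cs.dim (Usp V v0 p n r) = cs.dim (U n)"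
  unfolding Usp_def
  using span_subset_vanishing_off[OF Udiag_subset_vanishing_off] inj_on_Hop_pow
  by (intro cs.dim_image_inj_on[OF linear_Hop_pow]) (blast intro: inj_on_subset)

lemma dim_Usp_Suc: "cs.dim (Usp V v0 p (Suc m) r) = (\<Prod>q<m. d q) * (d m - 1)"
  by (simp add: dim_Usp dim_Udiag_Suc card_sphere diff_mult_distrib2)

lemma dim_Udiag_pos:
  assumes "n = 0 \<or> 2 \<le> d (n - 1)"
  shows "0 < cs.dim (U n)"
proof (cases n)
  case (Suc m)
  have "0 < (\<Prod>q<m. d q)" using degree_pos by (simp add: prod_pos)
  then show ?thesis using assms Suc by (simp add: dim_Udiag_Suc card_sphere)
qed (simp add: dim_Udiag_0)

lemma Usp_subset_Vsp:
  assumes "n \<le> r"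
  shows "Usp V v0 p n r \<subseteq> Vsp V v0 p n"
proof
  fix \<xi> assume \<xi>: "\<xi> \<in> Usp V v0 p n r"
  then have vanishing: "\<xi> \<in> vanishing_off (Sph r)" using Usp_subset_vanishing_off assms by blast
  have "\<xi> \<in> l2 V"
    using vanishing vanishing_off_subset_l2[OF finite_sphere] by (auto simp: sphere_def)
  moreover have "\<forall>r'<n. \<forall>v\<in>Sph r'. \<xi> v = 0"
    using vanishing assms by (auto simp: vanishing_off_def sphere_def)
  moreover have "(\<lambda>v. if v \<in> Sph r' then \<xi> v else 0) \<in> Usp V v0 p n r'" for r'
  proof (cases "r' = r")
    case True
    have "(\<lambda>v. if v \<in> Sph r' then \<xi> v else 0) = \<xi>"
      using vanishing True by (auto simp: vanishing_off_def fun_eq_iff)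
    then show ?thesis using \<xi> True by simp
  next
    case False
    have "(\<lambda>v. if v \<in> Sph r' then \<xi> v else 0) = 0"
      using vanishing False by (auto simp: vanishing_off_def sphere_def fun_eq_iff)
    moreover have "0 \<in> Usp V v0 p n r'"
      using cs.linear_0[OF linear_Hop_pow] cs.subspace_0[OF subspace_orth_compl]
      by (metis Udiag_eq_orth_compl Usp_def image_eqI)
    ultimately show ?thesis by simp
  qed
  ultimately show "\<xi> \<in> Vsp V v0 p n" by (simp add: Vsp_def)
qed

lemma Vsp_not_finite_span:
  assumes "n = 0 \<or> 2 \<le> d (n - 1)"
  shows "\<not> (\<exists>B. finite B \<and> Vsp V v0 p n \<subseteq> cspan B)"
proof
  assume "\<exists>B. finite B \<and> Vsp V v0 p n \<subseteq> cspan B"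
  then obtain B where B: "finite B" "Vsp V v0 p n \<subseteq> cs.span B" by (auto simp: cspan_def)
  have "\<exists>e. e \<in> Usp V v0 p n r \<and> e \<noteq> 0" for r
  proof (rule ccontr)
    assume "\<nexists>e. e \<in> Usp V v0 p n r \<and> e \<noteq> 0"
    then have "Usp V v0 p n r \<subseteq> cs.span {}" by (auto simp: cs.span_empty)
    then have "cs.dim (Usp V v0 p n r) \<le> 0" using cs.dim_le_card[OF _ finite.emptyI] by simp
    then show False using dim_Udiag_pos[OF assms] dim_Usp by simp
  qed
  then obtain e where e: "\<And>r. e r \<in> Usp V v0 p n r" "\<And>r. e r \<noteq> 0" by metis
  let ?I = "{n..n + card B}"
  have "cs.independent (e ` ?I) \<and> card (e ` ?I) = card ?I"
  proof (rule independent_disjoint_supports)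
    show "disjoint_family_on Sph ?I" by (auto simp: disjoint_family_on_def sphere_def)
    show "e r \<in> vanishing_off (Sph r)" if "r \<in> ?I" for r
      using e(1)[of r] Usp_subset_vanishing_off[of n r] that by auto
  qed (use e(2) in simp_all)
  moreover have "e ` ?I \<subseteq> cs.span B"
    using e(1) Usp_subset_Vsp B(2) by fastforce
  ultimately have "card ?I \<le> card B"
    using cs.independent_span_bound[OF B(1)] by metis
  then show False by simp
qed

end

theorem proposition4p3:
  fixes V :: "'v set" and v0 :: 'v and p :: "'v \<Rightarrow> 'v" and d :: "nat \<Rightarrow> nat"
  assumes tree: "sph_sym_tree V v0 p d"
    and inf: "infinite V"
    and deg: "\<forall>r. d r \<ge> 2"
    and bdd: "\<exists>M. \<forall>r. d r \<le> M"
  shows "(\<forall>n. cdim (l2 (sphere V v0 p n)) = card (sphere V v0 p n)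
              \<and> card (sphere V v0 p n) = (\<Prod>q<n. d q))
       \<and> (\<forall>n r. 2 \<le> n \<and> n \<le> r \<longrightarrow> cdim (Usp V v0 p n r) = (\<Prod>q<n - 1. d q) * (d (n - 1) - 1))
       \<and> (\<forall>r. 1 \<le> r \<longrightarrow> cdim (Usp V v0 p 1 r) = d 0 - 1)
       \<and> (\<forall>r. cdim (Usp V v0 p 0 r) = 1)
       \<and> (\<forall>n. \<not> (\<exists>B. finite B \<and> Vsp V v0 p n \<subseteq> cspan B))"
proof -
  interpret sph_tree V v0 p d
    using tree deg by unfold_locales (auto intro: less_le_trans[of 0 2])
  have "cdim (Usp V v0 p n r) = (\<Prod>q<n - 1. d q) * (d (n - 1) - 1)" if "1 \<le> n" for n r
    using dim_Usp_Suc[of "n - 1" r] that by (simp add: cdim_def)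
  moreover have "cdim (Usp V v0 p 0 r) = 1" for r
    by (simp add: cdim_def dim_Usp dim_Udiag_0)
  ultimately show ?thesis
    using Vsp_not_finite_span deg
    by (auto simp: cdim_def l2_finite[OF finite_sphere] dim_vanishing_off[OF finite_sphere]
        card_sphere)
qed

end
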